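(* Let $H$ be a graph and $W\subseteq V(H)$ nonempty. Then $\gamma(H)\ge \varepsilon(H,W)\cdot|W|^2/108$.
   Context: For $u,v\in V(H)$, $\mathcal P_H(u,v)$ is the set of paths from $u$ to $v$ in $H$; for $u=v$ it contains only the one-vertex path $(u)$. The concurrent flow LP for $H$ and $W$ with vertex capacity $C>0$: maximize $\varepsilon$ subject to $\sum_{p\in\mathcal P_H(u,v)}x_p\ge\varepsilon$ for all $u,v\in W$; $\sum_{u,v\in W}\sum_{p\in\mathcal P_H(u,v):\,w\in p}x_p\le C$ for all $w\in V(H)$; $x_p\ge0$. $\varepsilon(H,W)$ is the optimal value for $C=1$. Blowup: $H\otimes J_t$ has vertices $v^{(i)}$ ($v\in V(H)$, $i\in[t]$) and edges $u^{(i)}v^{(j)}$ for $uv\in E(H)$, all $i,j\in[t]$, and $u^{(i)}u^{(j)}$ for $u\in V(H)$, $i\neq j$. A matching on $X$ is a set of pairwise disjoint unordered pairs of distinct vertices of $X$ (not necessarily edges); $X$ is matching-linked in a graph if for every matching $M$ on $X$ there are pairwise vertex-disjoint paths connecting the two vertices of each pair of $M$. Linkage capacity $\gamma(H)$: the supremum of all $c>0$ such that for all sufficiently large $t$ the blowup $H\otimes J_t$ contains a matching-linked set of size $\lfloor ct\rfloor$. *)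

theory Defs
  imports Complex_Main
begin

definition simple_graph :: "'v set \<Rightarrow> ('v \<Rightarrow> 'v \<Rightarrow> bool) \<Rightarrow> bool" where
  "simple_graph V E \<longleftrightarrow> finite V \<and> (\<forall>u v. E u v \<longrightarrow> u \<in> V \<and> v \<in> V \<and> u \<noteq> v)
     \<and> (\<forall>u v. E u v \<longrightarrow> E v u)"

definition paths :: "'v set \<Rightarrow> ('v \<Rightarrow> 'v \<Rightarrow> bool) \<Rightarrow> 'v \<Rightarrow> 'v \<Rightarrow> 'v list set" where
  "paths V E u v = {p. p \<noteq> [] \<and> hd p = u \<and> last p = v \<and> distinct p \<and> set p \<subseteq> V
                      \<and> successively E p}"

text \<open>Feasibility for the concurrent flow LP with vertex capacity C, value e.\<close>
definition cf_feasible :: "'v set \<Rightarrow> ('v \<Rightarrow> 'v \<Rightarrow> bool) \<Rightarrow> 'v set \<Rightarrow> real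
      \<Rightarrow> ('v list \<Rightarrow> real) \<Rightarrow> real \<Rightarrow> bool" where
  "cf_feasible V E W C x e \<longleftrightarrow>
     (\<forall>u\<in>W. \<forall>v\<in>W. (\<Sum>p\<in>paths V E u v. x p) \<ge> e)
   \<and> (\<forall>w\<in>V. (\<Sum>(u,v)\<in>W \<times> W. \<Sum>p\<in>{p \<in> paths V E u v. w \<in> set p}. x p) \<le> C)
   \<and> (\<forall>p. x p \<ge> 0)"

definition eps_cf :: "'v set \<Rightarrow> ('v \<Rightarrow> 'v \<Rightarrow> bool) \<Rightarrow> 'v set \<Rightarrow> real" where
  "eps_cf V E W = Sup {e. \<exists>x. cf_feasible V E W 1 x e}"

definition blowup_V :: "'v set \<Rightarrow> nat \<Rightarrow> ('v \<times> nat) set" where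
  "blowup_V V t = V \<times> {..<t}"

definition blowup_E :: "('v \<Rightarrow> 'v \<Rightarrow> bool) \<Rightarrow> ('v \<times> nat) \<Rightarrow> ('v \<times> nat) \<Rightarrow> bool" where
  "blowup_E E a b \<longleftrightarrow> E (fst a) (fst b) \<or> (fst a = fst b \<and> snd a \<noteq> snd b)"

definition is_matching_on :: "'a set \<Rightarrow> 'a set set \<Rightarrow> bool" where
  "is_matching_on X M \<longleftrightarrow> (\<forall>e\<in>M. e \<subseteq> X \<and> card e = 2)
     \<and> (\<forall>e\<in>M. \<forall>e'\<in>M. e \<noteq> e' \<longrightarrow> e \<inter> e' = {})"

definition matching_linked :: "'a set \<Rightarrow> ('a \<Rightarrow> 'a \<Rightarrow> bool) \<Rightarrow> 'a set \<Rightarrow> bool" where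
  "matching_linked V E X \<longleftrightarrow> X \<subseteq> V \<and>
     (\<forall>M. is_matching_on X M \<longrightarrow>
        (\<exists>P. (\<forall>e\<in>M. \<exists>u v. e = {u, v} \<and> P e \<in> paths V E u v)
           \<and> (\<forall>e\<in>M. \<forall>e'\<in>M. e \<noteq> e' \<longrightarrow> set (P e) \<inter> set (P e') = {})))"

definition linkage_capacity :: "'v set \<Rightarrow> ('v \<Rightarrow> 'v \<Rightarrow> bool) \<Rightarrow> real" where
  "linkage_capacity V E = Sup {c. c > 0 \<and> (\<exists>T. \<forall>t\<ge>T. \<exists>X.
       matching_linked (blowup_V V t) (blowup_E E) X \<and> card X = nat \<lfloor>c * real t\<rfloor>)}"

end

theory Submission
  imports Defs "HOL-Library.Multiset"
begin

text \<open>Let \<open>x\<close> be a feasible concurrent flow of value \<open>e > 0\<close> and let \<open>k = |W|\<close>. In the blowup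
  \<open>H \<otimes> J\<^sub>t\<close> reserve the layers below \<open>s \<approx> e k t / 108\<close> for terminals and use the other layers
  for routing. For every ordered pair \<open>(u, z) \<in> W \<times> W\<close> draw \<open>L \<approx> 2 s / k\<close> paths from \<open>u\<close> to \<open>z\<close>,
  each path \<open>p\<close> about \<open>L x\<^sub>p / e\<close> times. By the capacity constraint at most \<open>L / e + O(1) \<le> t - s\<close>
  drawn paths pass through any vertex, so every drawn path gets its own copies of its vertices.
  Given a matching on a set \<open>X \<subseteq> W \<times> {..<s}\<close> of \<open>k s\<close> terminals, send both ends of each pair
  greedily to a common hub \<open>z \<in> W\<close> so that no vertex sends more than \<open>L\<close> terminals to the same hub;
  then every terminal follows a drawn path of its own to a copy of its hub, and two distinct copies of
  the hub are adjacent in the blowup.\<close>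

lemma exists_sequence_with_multiplicities:
  fixes n :: "'a \<Rightarrow> nat"
  assumes "finite P" and "L \<le> (\<Sum>p\<in>P. n p)"
  shows "\<exists>\<pi>. (\<forall>l<L. \<pi> l \<in> P) \<and> (\<forall>p. card {l. l < L \<and> \<pi> l = p} \<le> n p)"
proof -
  obtain xs where xs: "mset xs = (\<Sum>p\<in>P. replicate_mset (n p) p)" using ex_mset by blast
  have count_xs: "count (mset xs) q = (if q \<in> P then n q else 0)" for q
    unfolding xs count_sum using assms(1) by simp
  have "length xs = (\<Sum>p\<in>P. n p)"
    unfolding size_mset[symmetric] xs by (induct P rule: infinite_finite_induct) auto
  then have L_le: "L \<le> length xs" using assms(2) by simp
  have "\<forall>l<L. xs ! l \<in> P"
    using L_le count_xs by (metis count_mset_0_iff less_le_trans nth_mem)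
  moreover have "card {l. l < L \<and> xs ! l = p} \<le> n p" for p
  proof -
    have "card {l. l < L \<and> xs ! l = p} \<le> card {l. l < length xs \<and> p = xs ! l}"
      using L_le by (intro card_mono) auto
    also have "\<dots> = count (mset xs) p"
      by (simp add: count_mset count_list_eq_length_filter length_filter_conv_card)
    also have "\<dots> \<le> n p" using count_xs[of p] by simp
    finally show ?thesis .
  qed
  ultimately show ?thesis by blast
qed

lemma card_indices_le_multiplicities:
  fixes L :: nat
  assumes "finite P" and "\<forall>j<L. f j \<in> P" and "\<forall>p. card {j. j < L \<and> f j = p} \<le> n p"
  shows "card {j. j < L \<and> Q (f j)} \<le> (\<Sum>p\<in>{p\<in>P. Q p}. n p)"
proof -
  have "card {j. j < L \<and> Q (f j)} = card (\<Union>p\<in>{p\<in>P. Q p}. {j. j < L \<and> f j = p})"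
    using assms(2) by (intro arg_cong[where f = card]) auto
  also have "\<dots> \<le> (\<Sum>p\<in>{p\<in>P. Q p}. card {j. j < L \<and> f j = p})"
    by (rule card_UN_le) (use assms(1) in simp)
  also have "\<dots> \<le> (\<Sum>p\<in>{p\<in>P. Q p}. n p)" using assms(3) by (intro sum_mono) simp
  finally show ?thesis .
qed

lemma exists_fiberwise_labelling:
  assumes "finite A"
  shows "\<exists>l. \<forall>a\<in>A. l a < card {b\<in>A. g b = g a} \<and> (\<forall>b\<in>A. g b = g a \<and> l b = l a \<longrightarrow> b = a)"
proof -
  have "\<forall>y. \<exists>f. bij_betw f {b\<in>A. g b = y} {0..<card {b\<in>A. g b = y}}"
    using assms by (intro allI ex_bij_betw_finite_nat) simp
  from choice[OF this] obtain f where f: "\<And>y. bij_betw (f y) {b\<in>A. g b = y} {0..<card {b\<in>A. g b = y}}"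
    by blast
  have "f (g a) a < card {b\<in>A. g b = g a}" if "a \<in> A" for a
  proof -
    have "f (g a) a \<in> {0..<card {b\<in>A. g b = g a}}" using bij_betwE[OF f] that by blast
    then show ?thesis by simp
  qed
  moreover have "b = a" if "a \<in> A" "b \<in> A" "g b = g a" "f (g b) b = f (g a) a" for a b
    using inj_onD[OF bij_betw_imp_inj_on[OF f[of "g a"]]] that by simp
  ultimately show ?thesis by (intro exI[of _ "\<lambda>a. f (g a) a"]) blast
qed

lemma sum_card_fibers_le:
  assumes "finite A"
  shows "(\<Sum>z\<in>W. card {y\<in>A. h y = z}) \<le> card A"
proof (cases "finite W")
  case True
  have "(\<Sum>z\<in>W. card {y\<in>A. h y = z}) = card (\<Union>z\<in>W. {y\<in>A. h y = z})"
    using True assms by (subst card_UN_disjoint) auto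
  also have "\<dots> \<le> card A" using assms by (intro card_mono) auto
  finally show ?thesis .
qed simp

lemma exists_light_hub:
  fixes c c' :: "'a \<Rightarrow> nat"
  assumes "(\<Sum>z\<in>W. c z) + 1 \<le> s" and "(\<Sum>z\<in>W. c' z) + 1 \<le> s"
    and "2 * s + card W \<le> card W * L"
  shows "\<exists>z\<in>W. c z + c' z + 2 \<le> L"
proof (rule ccontr)
  assume "\<not> ?thesis"
  then have "\<And>z. z \<in> W \<Longrightarrow> L \<le> c z + c' z + 1" by fastforce
  then have "(\<Sum>z\<in>W. L) \<le> (\<Sum>z\<in>W. c z + c' z + 1)" by (rule sum_mono)
  also have "\<dots> = (\<Sum>z\<in>W. c z) + (\<Sum>z\<in>W. c' z) + card W"
    by (simp only: sum.distrib) simp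
  finally show False using assms by simp
qed

lemma hub_assignment:
  fixes M :: "'a set set" and f :: "'a \<Rightarrow> 'v"
  assumes "finite M" and "\<forall>e\<in>M. card e = 2" and "\<forall>e\<in>M. \<forall>e'\<in>M. e \<noteq> e' \<longrightarrow> e \<inter> e' = {}"
    and "\<forall>u. card {a \<in> \<Union>M. f a = u} \<le> s" and "2 * s + card W \<le> card W * L"
  shows "\<exists>h. (\<forall>e\<in>M. \<forall>a\<in>e. \<forall>b\<in>e. h a = h b) \<and> (\<forall>a\<in>\<Union>M. h a \<in> W)
            \<and> (\<forall>u z. card {a\<in>\<Union>M. f a = u \<and> h a = z} \<le> L)"
  using assms(1-4)
proof (induction M rule: finite_induct)
  case empty
  then show ?case by auto
next
  case (insert e M)
  obtain a b where ab: "e = {a, b}" "a \<noteq> b" using insert.prems(1) card_2_iff by (metis insertCI)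
  have disj: "e \<inter> \<Union>M = {}" using insert.prems(2) insert.hyps(2) by fastforce
  have fin: "finite (\<Union>(insert e M))"
    using insert.hyps(1) insert.prems(1) by (metis card.infinite finite_Union finite_insert zero_neq_numeral)
  have "card {y \<in> \<Union>M. f y = u} \<le> card {y \<in> \<Union>(insert e M). f y = u}" for u
    using fin by (intro card_mono) (auto intro: rev_finite_subset)
  then have "\<forall>u. card {y \<in> \<Union>M. f y = u} \<le> s" using insert.prems(3) le_trans by blast
  moreover have "\<forall>e\<in>M. card e = 2" "\<forall>e\<in>M. \<forall>e'\<in>M. e \<noteq> e' \<longrightarrow> e \<inter> e' = {}"
    using insert.prems(1,2) by auto
  ultimately obtain h where h: "\<forall>e\<in>M. \<forall>a\<in>e. \<forall>b\<in>e. h a = h b" "\<forall>a\<in>\<Union>M. h a \<in> W"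
    "\<forall>u z. card {y\<in>\<Union>M. f y = u \<and> h y = z} \<le> L"
    using insert.IH by blast
  define cnt where "cnt u z = card {y\<in>\<Union>M. f y = u \<and> h y = z}" for u z
  have room: "(\<Sum>z\<in>W. cnt (f c) z) + 1 \<le> s" if "c \<in> e" for c
  proof -
    define C where "C = {y\<in>\<Union>M. f y = f c}"
    have "finite C" unfolding C_def by (intro finite_subset[OF _ fin]) auto
    then have "(\<Sum>z\<in>W. cnt (f c) z) \<le> card C"
      using sum_card_fibers_le[where A=C and W=W and h=h] unfolding cnt_def C_def by simp
    moreover have "card (insert c C) = card C + 1"
      using \<open>finite C\<close> disj that unfolding C_def by (subst card_insert_disjoint) auto
    moreover have "card (insert c C) \<le> card {y\<in>\<Union>(insert e M). f y = f c}"
      using that unfolding C_def by (intro card_mono finite_subset[OF _ fin]) auto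
    ultimately show ?thesis using insert.prems(3)[rule_format, of "f c"] by linarith
  qed
  obtain z where z: "z \<in> W" "cnt (f a) z + cnt (f b) z + 2 \<le> L"
    using exists_light_hub[OF room room assms(5)] ab by blast
  define h' where "h' y = (if y \<in> e then z else h y)" for y
  have "card {y\<in>\<Union>(insert e M). f y = u \<and> h' y = z'} \<le> L" for u z'
  proof -
    have "finite ({y\<in>\<Union>M. f y = u \<and> h y = z'} \<union> {y\<in>e. f y = u \<and> z = z'})"
      by (rule finite_subset[OF _ fin]) auto
    then have "card {y\<in>\<Union>(insert e M). f y = u \<and> h' y = z'}
        \<le> card ({y\<in>\<Union>M. f y = u \<and> h y = z'} \<union> {y\<in>e. f y = u \<and> z = z'})"
      using disj by (intro card_mono) (auto simp: h'_def)
    also have "\<dots> \<le> cnt u z' + card {y\<in>e. f y = u \<and> z = z'}"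
      unfolding cnt_def by (rule card_Un_le)
    also have "\<dots> \<le> L"
    proof (cases "z' = z \<and> (u = f a \<or> u = f b)")
      case True
      have "card {y\<in>e. f y = u \<and> z = z'} \<le> card e" using ab by (intro card_mono) auto
      then show ?thesis using True z(2) ab by auto
    next
      case False
      then have "{y\<in>e. f y = u \<and> z = z'} = {}" using ab by auto
      then show ?thesis using h(3) unfolding cnt_def by (simp only: card.empty add_0_right)
    qed
    finally show ?thesis .
  qed
  moreover have "h' a' = h' b'" if "e' \<in> insert e M" "a' \<in> e'" "b' \<in> e'" for e' a' b'
  proof (cases "e' = e")
    case False
    then have "a' \<notin> e" "b' \<notin> e" "h a' = h b'" using that disj h(1) by blast+
    then show ?thesis unfolding h'_def by simp
  qed (use that in \<open>simp add: h'_def\<close>)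
  moreover have "\<forall>y\<in>\<Union>(insert e M). h' y \<in> W" using h(2) z(1) unfolding h'_def by auto
  ultimately show ?case by blast
qed

lemma card_triples_eq_sum:
  fixes L :: nat
  assumes "finite W"
  shows "card {\<sigma> \<in> W \<times> W \<times> {..<L}. P \<sigma>} = (\<Sum>(u, z)\<in>W \<times> W. card {j. j < L \<and> P (u, z, j)})"
proof -
  have "{\<sigma> \<in> W \<times> W \<times> {..<L}. P \<sigma>}
      = (\<lambda>((u, z), j). (u, z, j)) ` (SIGMA (u, z):W \<times> W. {j. j < L \<and> P (u, z, j)})"
    by force
  also have "card \<dots> = card (SIGMA (u, z):W \<times> W. {j. j < L \<and> P (u, z, j)})"
    by (rule card_image) (auto simp: inj_on_def)
  also have "\<dots> = (\<Sum>(u, z)\<in>W \<times> W. card {j. j < L \<and> P (u, z, j)})"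
    using assms by (subst card_SigmaI) (auto simp: case_prod_beta)
  finally show ?thesis .
qed

lemma nat_ceiling_le_plus_one: "0 \<le> y \<Longrightarrow> real (nat \<lceil>y\<rceil>) \<le> y + 1"
  by linarith

lemma add_le_mul_div_add_two:
  fixes m k :: nat
  assumes "k > 0"
  shows "m + k \<le> k * (m div k + 2)"
proof -
  have "k * (m div k) + m mod k = m" by (rule mult_div_mod_eq)
  then show ?thesis using mod_less_divisor[OF assms, of m] unfolding distrib_left by linarith
qed

lemma finite_paths: "finite V \<Longrightarrow> finite (paths V E u v)"
proof -
  assume fV: "finite V"
  have "length p \<le> card V" if "p \<in> paths V E u v" for p
  proof -
    have "set p \<subseteq> V" "distinct p" using that unfolding paths_def by auto
    then show ?thesis using card_mono[OF fV] distinct_card by metis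
  qed
  then have "paths V E u v \<subseteq> {xs. set xs \<subseteq> V \<and> length xs \<le> card V}"
    unfolding paths_def by auto
  then show ?thesis using finite_lists_length_le[OF fV] finite_subset by blast
qed

lemma paths_refl: "w \<in> V \<Longrightarrow> paths V E w w = {[w]}"
proof -
  assume wV: "w \<in> V"
  have "p = [w]" if "p \<in> paths V E w w" for p
  proof (cases p)
    case (Cons a q)
    have "a = w" "last p = w" "w \<notin> set q" using that Cons unfolding paths_def by auto
    then have "q = []" using Cons by (metis last_ConsR last_in_set)
    then show ?thesis using Cons \<open>a = w\<close> by simp
  qed (use that in \<open>auto simp: paths_def\<close>)
  moreover have "[w] \<in> paths V E w w" unfolding paths_def using wV by simp
  ultimately show ?thesis by blast
qed

lemma blowup_E_sym: "simple_graph V E \<Longrightarrow> blowup_E E a b \<Longrightarrow> blowup_E E b a"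
  unfolding blowup_E_def simple_graph_def by auto

definition lift_path :: "('v \<Rightarrow> nat) \<Rightarrow> 'v list \<Rightarrow> nat \<Rightarrow> ('v \<times> nat) list" where
  "lift_path f p i = (hd p, i) # map (\<lambda>w. (w, f w)) (tl p)"

lemma map_fst_lift_path: "p \<noteq> [] \<Longrightarrow> map fst (lift_path f p i) = p"
  unfolding lift_path_def by (simp add: comp_def)

lemma set_lift_path: "set (lift_path f p i) \<subseteq> insert (hd p, i) ((\<lambda>w. (w, f w)) ` set (tl p))"
  unfolding lift_path_def by auto

lemma lift_path_in_paths:
  assumes p: "p \<in> paths V E u v" and "i < t" and "\<forall>w\<in>set p. f w < t"
  shows "\<exists>j. lift_path f p i \<in> paths (blowup_V V t) (blowup_E E) (u, i) (v, j)"
proof -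
  have p': "p \<noteq> []" "hd p = u" "last p = v" "distinct p" "set p \<subseteq> V" "successively E p"
    using p unfolding paths_def by auto
  let ?q = "lift_path f p i"
  have fst_q: "map fst ?q = p" using map_fst_lift_path[OF p'(1)] .
  have "fst (last ?q) = v" using fst_q p' by (metis last_map lift_path_def list.distinct(1))
  moreover have "distinct ?q" using fst_q p'(4) by (metis distinct_map)
  moreover have "successively (blowup_E E) ?q"
  proof -
    have "successively (\<lambda>a b. E (fst a) (fst b)) ?q"
      using p'(6) fst_q by (metis successively_map)
    then show ?thesis by (rule successively_mono) (simp add: blowup_E_def)
  qed
  moreover have "set ?q \<subseteq> blowup_V V t"
  proof -
    have "hd p \<in> set p" "set (tl p) \<subseteq> set p" using p'(1) by (auto simp: list.set_sel)
    then show ?thesis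
      using set_lift_path[of f p i] p'(5) assms(2,3) unfolding blowup_V_def by fastforce
  qed
  ultimately have "?q \<in> paths (blowup_V V t) (blowup_E E) (u, i) (fst (last ?q), snd (last ?q))"
    using p' unfolding paths_def lift_path_def by auto
  then show ?thesis using \<open>fst (last ?q) = v\<close> by metis
qed

lemma lift_paths_disjoint:
  assumes "i < s" "i' < s" "\<forall>w\<in>set p. s \<le> f w" "\<forall>w\<in>set p'. s \<le> f' w"
    and "(hd p, i) \<noteq> (hd p', i')" and "\<forall>w\<in>set p \<inter> set p'. f w \<noteq> f' w"
  shows "set (lift_path f p i) \<inter> set (lift_path f' p' i') = {}"
proof (rule equals0I)
  fix y assume y: "y \<in> set (lift_path f p i) \<inter> set (lift_path f' p' i')"
  have "set (tl q) \<subseteq> set q" for q :: "'a list" by (cases q) auto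
  then have "y = (hd p, i) \<or> (\<exists>w\<in>set p. y = (w, f w))"
    and "y = (hd p', i') \<or> (\<exists>w\<in>set p'. y = (w, f' w))"
    using y set_lift_path[of f p i] set_lift_path[of f' p' i'] by blast+
  then show False using assms by fastforce
qed

lemma paths_append_rev_blowup:
  assumes "simple_graph V E"
    and A: "A \<in> paths (blowup_V V t) (blowup_E E) a x"
    and B: "B \<in> paths (blowup_V V t) (blowup_E E) b y"
    and "fst x = fst y" and disj: "set A \<inter> set B = {}"
  shows "A @ rev B \<in> paths (blowup_V V t) (blowup_E E) a b"
proof -
  have A': "A \<noteq> []" "hd A = a" "last A = x" "distinct A" "set A \<subseteq> blowup_V V t"
    "successively (blowup_E E) A" using A unfolding paths_def by auto
  have B': "B \<noteq> []" "hd B = b" "last B = y" "distinct B" "set B \<subseteq> blowup_V V t"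
    "successively (blowup_E E) B" using B unfolding paths_def by auto
  have "x \<noteq> y" using disj A'(1,3) B'(1,3) by (metis disjoint_iff last_in_set)
  then have "blowup_E E x y" using \<open>fst x = fst y\<close> unfolding blowup_E_def by (metis prod.expand)
  moreover have "successively (\<lambda>c d. blowup_E E d c) B"
    using B'(6) by (rule successively_mono) (rule blowup_E_sym[OF assms(1)])
  ultimately have "successively (blowup_E E) (A @ rev B)"
    using A'(1,3,6) B'(1,3) by (simp add: successively_append_iff hd_rev)
  then show ?thesis using A' B' disj unfolding paths_def by (auto simp: last_rev)
qed

lemma linkage_from_arms:
  assumes "simple_graph V E" and "is_matching_on X M"
    and arm: "\<forall>a\<in>\<Union>M. \<exists>j. arm a \<in> paths (blowup_V V t) (blowup_E E) a (h a, j)"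
    and hub: "\<forall>e\<in>M. \<forall>a\<in>e. \<forall>b\<in>e. h a = h b"
    and disj: "\<forall>a\<in>\<Union>M. \<forall>b\<in>\<Union>M. a \<noteq> b \<longrightarrow> set (arm a) \<inter> set (arm b) = {}"
  shows "\<exists>P. (\<forall>e\<in>M. \<exists>u v. e = {u, v} \<and> P e \<in> paths (blowup_V V t) (blowup_E E) u v)
           \<and> (\<forall>e\<in>M. \<forall>e'\<in>M. e \<noteq> e' \<longrightarrow> set (P e) \<inter> set (P e') = {})"
proof -
  have "\<forall>e\<in>M. \<exists>ab. e = {fst ab, snd ab} \<and> fst ab \<noteq> snd ab"
    using assms(2) unfolding is_matching_on_def card_2_iff by fastforce
  then obtain ends where ends: "\<forall>e\<in>M. e = {fst (ends e), snd (ends e)} \<and> fst (ends e) \<noteq> snd (ends e)"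
    by metis
  define P where "P e = arm (fst (ends e)) @ rev (arm (snd (ends e)))" for e
  have "P e \<in> paths (blowup_V V t) (blowup_E E) (fst (ends e)) (snd (ends e))" if "e \<in> M" for e
  proof -
    let ?a = "fst (ends e)" and ?b = "snd (ends e)"
    have ab: "?a \<in> e" "?b \<in> e" "?a \<noteq> ?b" using ends that by auto
    then have "?a \<in> \<Union>M" "?b \<in> \<Union>M" using that by auto
    then obtain i j where a: "arm ?a \<in> paths (blowup_V V t) (blowup_E E) ?a (h ?a, i)"
      and b: "arm ?b \<in> paths (blowup_V V t) (blowup_E E) ?b (h ?b, j)"
      and "set (arm ?a) \<inter> set (arm ?b) = {}" using arm disj ab(3) by meson
    moreover have "h ?a = h ?b" using hub that ab by blast
    ultimately show ?thesis unfolding P_def by (intro paths_append_rev_blowup[OF assms(1) a b]) simp_all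
  qed
  moreover have "set (P e) \<inter> set (P e') = {}" if "e \<in> M" "e' \<in> M" "e \<noteq> e'" for e e'
  proof -
    have "e \<inter> e' = {}" using assms(2) that unfolding is_matching_on_def by blast
    have arms: "set (arm a) \<inter> set (arm b) = {}" if "a \<in> e" "b \<in> e'" for a b
    proof -
      have "a \<noteq> b" using \<open>e \<inter> e' = {}\<close> that by blast
      moreover have "a \<in> \<Union>M" "b \<in> \<Union>M" using that \<open>e \<in> M\<close> \<open>e' \<in> M\<close> by blast+
      ultimately show ?thesis using disj by blast
    qed
    have "fst (ends e) \<in> e" "snd (ends e) \<in> e" "fst (ends e') \<in> e'" "snd (ends e') \<in> e'"
      using ends that by auto
    then show ?thesis unfolding P_def set_append set_rev Int_Un_distrib Int_Un_distrib2
      using arms by simp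
  qed
  ultimately show ?thesis using ends by blast
qed

text \<open>Route \<open>\<pi> (u, z, j)\<close> uses the copy of its vertex \<open>w\<close> in layer \<open>F (u, z, j) w\<close> of the blowup.\<close>

definition routing_system ::
    "'v set \<Rightarrow> ('v \<Rightarrow> 'v \<Rightarrow> bool) \<Rightarrow> 'v set \<Rightarrow> nat \<Rightarrow> nat \<Rightarrow> nat
      \<Rightarrow> ('v \<times> 'v \<times> nat \<Rightarrow> 'v list) \<Rightarrow> ('v \<times> 'v \<times> nat \<Rightarrow> 'v \<Rightarrow> nat) \<Rightarrow> bool" where
  "routing_system V E W L s t \<pi> F \<longleftrightarrow>
     (\<forall>u\<in>W. \<forall>z\<in>W. \<forall>j<L. \<pi> (u, z, j) \<in> paths V E u z
        \<and> (\<forall>w\<in>set (\<pi> (u, z, j)). s \<le> F (u, z, j) w \<and> F (u, z, j) w < t))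
   \<and> (\<forall>\<sigma>\<in>W \<times> W \<times> {..<L}. \<forall>\<sigma>'\<in>W \<times> W \<times> {..<L}. \<forall>w\<in>set (\<pi> \<sigma>) \<inter> set (\<pi> \<sigma>').
        F \<sigma> w = F \<sigma>' w \<longrightarrow> \<sigma> = \<sigma>')"

lemma arms_of_routing_system:
  assumes rs: "routing_system V E W L s t \<pi> F" and "A \<subseteq> W \<times> {..<s}"
    and hl: "\<forall>a\<in>A. h a \<in> W \<and> l a < L"
    and inj: "\<forall>a\<in>A. \<forall>b\<in>A. fst a = fst b \<and> h a = h b \<and> l a = l b \<longrightarrow> a = b"
  defines "arm a \<equiv> lift_path (F (fst a, h a, l a)) (\<pi> (fst a, h a, l a)) (snd a)"
  shows "\<forall>a\<in>A. \<exists>j. arm a \<in> paths (blowup_V V t) (blowup_E E) a (h a, j)"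
    and "\<forall>a\<in>A. \<forall>b\<in>A. a \<noteq> b \<longrightarrow> set (arm a) \<inter> set (arm b) = {}"
proof -
  have rs_routes: "\<forall>u\<in>W. \<forall>z\<in>W. \<forall>j<L. \<pi> (u, z, j) \<in> paths V E u z
        \<and> (\<forall>w\<in>set (\<pi> (u, z, j)). s \<le> F (u, z, j) w \<and> F (u, z, j) w < t)"
    and rs_inj: "\<forall>\<sigma>\<in>W \<times> W \<times> {..<L}. \<forall>\<sigma>'\<in>W \<times> W \<times> {..<L}. \<forall>w\<in>set (\<pi> \<sigma>) \<inter> set (\<pi> \<sigma>').
        F \<sigma> w = F \<sigma>' w \<longrightarrow> \<sigma> = \<sigma>'"
    using rs unfolding routing_system_def by blast+
  have terminal: "fst a \<in> W" "snd a < s" "(fst a, h a, l a) \<in> W \<times> W \<times> {..<L}" if "a \<in> A" for a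
    using assms(2) hl that by auto
  have route: "\<pi> (fst a, h a, l a) \<in> paths V E (fst a) (h a)"
    and layers: "\<forall>w\<in>set (\<pi> (fst a, h a, l a)). s \<le> F (fst a, h a, l a) w \<and> F (fst a, h a, l a) w < t"
    if "a \<in> A" for a
    using rs_routes terminal[OF that] by auto
  have "snd a < t" if "a \<in> A" for a
  proof -
    have "\<pi> (fst a, h a, l a) \<noteq> []" using route[OF that] unfolding paths_def by simp
    then have "hd (\<pi> (fst a, h a, l a)) \<in> set (\<pi> (fst a, h a, l a))" by (rule hd_in_set)
    then show ?thesis using layers[OF that] terminal(2)[OF that] by fastforce
  qed
  then show "\<forall>a\<in>A. \<exists>j. arm a \<in> paths (blowup_V V t) (blowup_E E) a (h a, j)"
    using lift_path_in_paths[OF route] layers unfolding arm_def by fastforce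
  show "\<forall>a\<in>A. \<forall>b\<in>A. a \<noteq> b \<longrightarrow> set (arm a) \<inter> set (arm b) = {}"
  proof (intro ballI impI)
    fix a b assume ab: "a \<in> A" "b \<in> A" "a \<noteq> b"
    have "hd (\<pi> (fst c, h c, l c)) = fst c" if "c \<in> A" for c
      using route[OF that] unfolding paths_def by simp
    then have "(hd (\<pi> (fst a, h a, l a)), snd a) \<noteq> (hd (\<pi> (fst b, h b, l b)), snd b)"
      using ab by (simp add: prod_eq_iff)
    moreover have "(fst a, h a, l a) \<noteq> (fst b, h b, l b)" using inj ab by blast
    then have "\<forall>w\<in>set (\<pi> (fst a, h a, l a)) \<inter> set (\<pi> (fst b, h b, l b)).
        F (fst a, h a, l a) w \<noteq> F (fst b, h b, l b) w"
      using rs_inj terminal(3) ab(1,2) by blast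
    ultimately show "set (arm a) \<inter> set (arm b) = {}"
      unfolding arm_def using layers[OF ab(1)] layers[OF ab(2)] terminal(2)[OF ab(1)] terminal(2)[OF ab(2)]
      by (intro lift_paths_disjoint) auto
  qed
qed

lemma hubs_and_labels_exist:
  assumes "finite W" and XW: "X \<subseteq> W \<times> {..<s}" and M: "is_matching_on X M"
    and L: "2 * s + card W \<le> card W * L"
  shows "\<exists>h l. (\<forall>e\<in>M. \<forall>a\<in>e. \<forall>b\<in>e. h a = h b) \<and> (\<forall>a\<in>\<Union>M. h a \<in> W \<and> l a < L)
     \<and> (\<forall>a\<in>\<Union>M. \<forall>b\<in>\<Union>M. fst a = fst b \<and> h a = h b \<and> l a = l b \<longrightarrow> a = b)"
proof -
  have MX: "\<Union>M \<subseteq> X" and pairs: "\<forall>e\<in>M. card e = 2"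
    and disjoint: "\<forall>e\<in>M. \<forall>e'\<in>M. e \<noteq> e' \<longrightarrow> e \<inter> e' = {}"
    using M unfolding is_matching_on_def by auto
  have "finite X" using XW assms(1) finite_subset by blast
  then have fin_U: "finite (\<Union>M)" using MX by (rule rev_finite_subset)
  then have "finite M" by (rule finite_UnionD)
  moreover have "card {a \<in> \<Union>M. fst a = u} \<le> s" for u
  proof -
    have "{a \<in> \<Union>M. fst a = u} \<subseteq> {u} \<times> {..<s}" using MX XW by auto
    then have "card {a \<in> \<Union>M. fst a = u} \<le> card ({u} \<times> {..<s})" by (intro card_mono) auto
    then show ?thesis by simp
  qed
  ultimately obtain h where h: "\<forall>e\<in>M. \<forall>a\<in>e. \<forall>b\<in>e. h a = h b" "\<forall>a\<in>\<Union>M. h a \<in> W"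
      "\<forall>u z. card {a \<in> \<Union>M. fst a = u \<and> h a = z} \<le> L"
    using hub_assignment[OF _ pairs disjoint _ L] by blast
  obtain l where l: "\<forall>a\<in>\<Union>M. l a < card {b \<in> \<Union>M. (fst b, h b) = (fst a, h a)}
      \<and> (\<forall>b\<in>\<Union>M. (fst b, h b) = (fst a, h a) \<and> l b = l a \<longrightarrow> b = a)"
    using exists_fiberwise_labelling[OF fin_U, of "\<lambda>a. (fst a, h a)"] by blast
  have "l a < L" if "a \<in> \<Union>M" for a
  proof -
    have "l a < card {b \<in> \<Union>M. (fst b, h b) = (fst a, h a)}" using l that by blast
    also have "\<dots> = card {b \<in> \<Union>M. fst b = fst a \<and> h b = h a}" by (rule arg_cong[where f = card]) auto
    also have "\<dots> \<le> L" using h(3) by blast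
    finally show ?thesis .
  qed
  then have "\<forall>a\<in>\<Union>M. h a \<in> W \<and> l a < L" using h(2) by blast
  moreover have "\<forall>a\<in>\<Union>M. \<forall>b\<in>\<Union>M. fst a = fst b \<and> h a = h b \<and> l a = l b \<longrightarrow> a = b"
  proof (intro ballI impI)
    fix a b assume "a \<in> \<Union>M" "b \<in> \<Union>M" "fst a = fst b \<and> h a = h b \<and> l a = l b"
    then have "(fst b, h b) = (fst a, h a) \<and> l b = l a" by simp
    then show "a = b" using l \<open>a \<in> \<Union>M\<close> \<open>b \<in> \<Union>M\<close> by blast
  qed
  ultimately show ?thesis using h(1) by blast
qed

lemma matching_linked_if_routing_system:
  assumes "simple_graph V E" and "W \<subseteq> V" and rs: "routing_system V E W L s t \<pi> F"
    and "s \<le> t" and L: "2 * s + card W \<le> card W * L" and XW: "X \<subseteq> W \<times> {..<s}"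
  shows "matching_linked (blowup_V V t) (blowup_E E) X"
  unfolding matching_linked_def
proof (intro conjI allI impI)
  show "X \<subseteq> blowup_V V t" using XW assms(2,4) unfolding blowup_V_def by auto
  fix M assume M: "is_matching_on X M"
  have "finite W" using assms(1,2) finite_subset unfolding simple_graph_def by blast
  then obtain h l where hub: "\<forall>e\<in>M. \<forall>a\<in>e. \<forall>b\<in>e. h a = h b"
    and hl: "\<forall>a\<in>\<Union>M. h a \<in> W \<and> l a < L"
    and inj: "\<forall>a\<in>\<Union>M. \<forall>b\<in>\<Union>M. fst a = fst b \<and> h a = h b \<and> l a = l b \<longrightarrow> a = b"
    using hubs_and_labels_exist[OF _ XW M L] by blast
  have "\<Union>M \<subseteq> W \<times> {..<s}" using M XW unfolding is_matching_on_def by blast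
  define arm where "arm a = lift_path (F (fst a, h a, l a)) (\<pi> (fst a, h a, l a)) (snd a)" for a
  have "\<forall>a\<in>\<Union>M. \<exists>j. arm a \<in> paths (blowup_V V t) (blowup_E E) a (h a, j)"
    and "\<forall>a\<in>\<Union>M. \<forall>b\<in>\<Union>M. a \<noteq> b \<longrightarrow> set (arm a) \<inter> set (arm b) = {}"
    using arms_of_routing_system[OF rs \<open>\<Union>M \<subseteq> W \<times> {..<s}\<close> hl inj] unfolding arm_def by blast+
  then show "\<exists>P. (\<forall>e\<in>M. \<exists>u v. e = {u, v} \<and> P e \<in> paths (blowup_V V t) (blowup_E E) u v)
      \<and> (\<forall>e\<in>M. \<forall>e'\<in>M. e \<noteq> e' \<longrightarrow> set (P e) \<inter> set (P e') = {})"
    by (rule linkage_from_arms[OF assms(1) M _ hub])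
qed

lemma routing_system_if_load_bounded:
  assumes "finite W" and route: "\<forall>u\<in>W. \<forall>z\<in>W. \<forall>j<L. \<pi> (u, z, j) \<in> paths V E u z"
    and load: "\<forall>w\<in>V. card {\<sigma> \<in> W \<times> W \<times> {..<L}. w \<in> set (\<pi> \<sigma>)} \<le> t - s"
  shows "\<exists>F. routing_system V E W L s t \<pi> F"
proof -
  define A where "A = Sigma (W \<times> W \<times> {..<L}) (\<lambda>\<sigma>. set (\<pi> \<sigma>))"
  have "finite A" unfolding A_def using assms(1) by auto
  then obtain l where l: "\<forall>a\<in>A. l a < card {b\<in>A. snd b = snd a}
      \<and> (\<forall>b\<in>A. snd b = snd a \<and> l b = l a \<longrightarrow> b = a)"
    using exists_fiberwise_labelling by blast
  define F where "F \<sigma> w = s + l (\<sigma>, w)" for \<sigma> w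
  have "F \<sigma> w < t" if "\<sigma> \<in> W \<times> W \<times> {..<L}" "w \<in> set (\<pi> \<sigma>)" for \<sigma> w
  proof -
    have "{b\<in>A. snd b = w} = (\<lambda>\<sigma>. (\<sigma>, w)) ` {\<sigma> \<in> W \<times> W \<times> {..<L}. w \<in> set (\<pi> \<sigma>)}"
      unfolding A_def by auto
    then have "card {b\<in>A. snd b = w} = card {\<sigma> \<in> W \<times> W \<times> {..<L}. w \<in> set (\<pi> \<sigma>)}"
      by (simp add: card_image inj_on_def)
    moreover have "w \<in> V" using route that unfolding paths_def by auto
    moreover have "(\<sigma>, w) \<in> A" unfolding A_def using that by simp
    ultimately show ?thesis using l load unfolding F_def by fastforce
  qed
  moreover have "\<sigma> = \<sigma>'" if "\<sigma> \<in> W \<times> W \<times> {..<L}" "\<sigma>' \<in> W \<times> W \<times> {..<L}"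
      "w \<in> set (\<pi> \<sigma>) \<inter> set (\<pi> \<sigma>')" "F \<sigma> w = F \<sigma>' w" for \<sigma> \<sigma>' w
    using l that unfolding A_def F_def by fastforce
  ultimately have "routing_system V E W L s t \<pi> F"
    unfolding routing_system_def F_def using route by auto
  then show ?thesis by blast
qed

lemma cf_feasible_value_le:
  assumes "finite W" and "W \<subseteq> V" and "W \<noteq> {}" and feas: "cf_feasible V E W 1 x e"
  shows "e * real (card W) \<le> 1"
proof -
  obtain u where u: "u \<in> W" using assms(3) by auto
  have xnn: "\<forall>p. 0 \<le> x p" and demand: "\<forall>u\<in>W. \<forall>z\<in>W. e \<le> (\<Sum>p\<in>paths V E u z. x p)"
    and congestion: "\<forall>w\<in>V. (\<Sum>(a, b)\<in>W \<times> W. \<Sum>p\<in>{p \<in> paths V E a b. w \<in> set p}. x p) \<le> 1"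
    using feas unfolding cf_feasible_def by auto
  define f where "f a b = (\<Sum>p\<in>{p \<in> paths V E a b. u \<in> set p}. x p)" for a b
  have f_nonneg: "0 \<le> f a b" for a b unfolding f_def using xnn by (intro sum_nonneg) auto
  have "f u b = (\<Sum>p\<in>paths V E u b. x p)" for b
    unfolding f_def paths_def by (rule sum.cong) (auto intro: hd_in_set)
  then have "e * real (card W) \<le> (\<Sum>b\<in>W. f u b)"
    using demand u sum_mono[of W "\<lambda>_. e" "f u"] by (simp add: mult.commute)
  also have "\<dots> \<le> (\<Sum>a\<in>W. \<Sum>b\<in>W. f a b)"
    using u assms(1) f_nonneg by (intro member_le_sum[of u W "\<lambda>a. \<Sum>b\<in>W. f a b"]) (auto intro: sum_nonneg)
  also have "\<dots> = (\<Sum>(a, b)\<in>W \<times> W. f a b)" by (rule sum.cartesian_product)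
  also have "\<dots> \<le> 1" using congestion u assms(2) unfolding f_def by auto
  finally show ?thesis .
qed

lemma cf_feasible_singleton:
  assumes "w \<in> V"
  shows "cf_feasible V E {w} 1 (\<lambda>p. if p = [w] then 1 else 0) 1"
proof -
  have "card {p. p = [w] \<and> v \<in> set p} \<le> 1" for v
    by (rule order_trans[OF card_mono[of "{[w]}"]]) auto
  then show ?thesis by (simp add: cf_feasible_def paths_refl[OF assms])
qed

lemma path_selection_with_bounded_load:
  fixes x :: "'v list \<Rightarrow> real"
  assumes "finite V" and "W \<subseteq> V" and feas: "cf_feasible V E W 1 x e" and "e > 0"
  shows "\<exists>\<pi>. (\<forall>u\<in>W. \<forall>z\<in>W. \<forall>j<L. \<pi> (u, z, j) \<in> paths V E u z)
      \<and> (\<forall>w\<in>V. real (card {\<sigma> \<in> W \<times> W \<times> {..<L}. w \<in> set (\<pi> \<sigma>)})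
            \<le> real L / e + (\<Sum>(u, z)\<in>W \<times> W. real (card (paths V E u z))))"
proof -
  have fW: "finite W" using assms(1,2) finite_subset by blast
  have fP: "finite (paths V E u z)" for u z using finite_paths[OF assms(1)] .
  have xnn: "\<forall>p. 0 \<le> x p" and demand: "\<forall>u\<in>W. \<forall>z\<in>W. e \<le> (\<Sum>p\<in>paths V E u z. x p)"
    and congestion: "\<forall>w\<in>V. (\<Sum>(u, z)\<in>W \<times> W. \<Sum>p\<in>{p \<in> paths V E u z. w \<in> set p}. x p) \<le> 1"
    using feas unfolding cf_feasible_def by auto
  define n where "n p = nat \<lceil>real L * x p / e\<rceil>" for p
  have "\<forall>uz\<in>W \<times> W. \<exists>f. (\<forall>j<L. f j \<in> paths V E (fst uz) (snd uz))
      \<and> (\<forall>p. card {j. j < L \<and> f j = p} \<le> n p)"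
  proof
    fix uz assume uz: "uz \<in> W \<times> W"
    let ?P = "paths V E (fst uz) (snd uz)"
    have "real L = real L / e * e" using \<open>e > 0\<close> by simp
    also have "\<dots> \<le> real L / e * (\<Sum>p\<in>?P. x p)"
      using demand uz \<open>e > 0\<close> by (intro mult_left_mono) auto
    also have "\<dots> \<le> (\<Sum>p\<in>?P. real (n p))"
      unfolding n_def sum_distrib_left by (intro sum_mono order_trans[OF _ real_nat_ceiling_ge]) simp
    finally have "L \<le> (\<Sum>p\<in>?P. n p)" by (simp only: of_nat_sum[symmetric] of_nat_le_iff)
    then show "\<exists>f. (\<forall>j<L. f j \<in> ?P) \<and> (\<forall>p. card {j. j < L \<and> f j = p} \<le> n p)"
      by (rule exists_sequence_with_multiplicities[OF fP])
  qed
  then obtain g where g: "\<forall>uz\<in>W \<times> W. (\<forall>j<L. g uz j \<in> paths V E (fst uz) (snd uz))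
      \<and> (\<forall>p. card {j. j < L \<and> g uz j = p} \<le> n p)"
    by (rule bchoice[THEN exE])
  define \<pi> where "\<pi> \<sigma> = g (fst \<sigma>, fst (snd \<sigma>)) (snd (snd \<sigma>))" for \<sigma> :: "'v \<times> 'v \<times> nat"
  have \<pi>: "\<forall>u\<in>W. \<forall>z\<in>W. (\<forall>j<L. \<pi> (u, z, j) \<in> paths V E u z)
      \<and> (\<forall>p. card {j. j < L \<and> \<pi> (u, z, j) = p} \<le> n p)"
    using g unfolding \<pi>_def by auto
  have "real (card {\<sigma> \<in> W \<times> W \<times> {..<L}. w \<in> set (\<pi> \<sigma>)})
      \<le> real L / e + (\<Sum>(u, z)\<in>W \<times> W. real (card (paths V E u z)))" if "w \<in> V" for w
  proof -
    let ?P = "\<lambda>u z. {p \<in> paths V E u z. w \<in> set p}"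
    have "real (card {\<sigma> \<in> W \<times> W \<times> {..<L}. w \<in> set (\<pi> \<sigma>)})
        = (\<Sum>(u, z)\<in>W \<times> W. real (card {j. j < L \<and> w \<in> set (\<pi> (u, z, j))}))"
      unfolding card_triples_eq_sum[OF fW] by (simp add: case_prod_beta)
    also have "\<dots> \<le> (\<Sum>(u, z)\<in>W \<times> W. \<Sum>p\<in>?P u z. real L / e * x p + 1)"
    proof (intro sum_mono, clarify)
      fix u z assume "u \<in> W" "z \<in> W"
      then have "card {j. j < L \<and> w \<in> set (\<pi> (u, z, j))} \<le> (\<Sum>p\<in>?P u z. n p)"
        using \<pi> by (intro card_indices_le_multiplicities[OF fP]) auto
      moreover have "real (n p) \<le> real L / e * x p + 1" for p
        unfolding n_def using xnn \<open>e > 0\<close> by (simp add: nat_ceiling_le_plus_one)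
      ultimately show "real (card {j. j < L \<and> w \<in> set (\<pi> (u, z, j))})
          \<le> (\<Sum>p\<in>?P u z. real L / e * x p + 1)"
        by (smt (verit) of_nat_le_iff of_nat_sum sum_mono)
    qed
    also have "\<dots> = real L / e * (\<Sum>(u, z)\<in>W \<times> W. \<Sum>p\<in>?P u z. x p)
        + (\<Sum>(u, z)\<in>W \<times> W. real (card (?P u z)))"
      by (simp add: sum.distrib sum_distrib_left case_prod_beta)
    also have "\<dots> \<le> real L / e * 1 + (\<Sum>(u, z)\<in>W \<times> W. real (card (paths V E u z)))"
      using congestion that \<open>e > 0\<close> fP
      by (intro add_mono mult_left_mono sum_mono) (auto intro: card_mono[OF fP])
    finally show ?thesis by simp
  qed
  then show ?thesis using \<pi> by blast
qed

lemma routing_system_exists: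
  assumes "finite V" and "W \<subseteq> V" and "cf_feasible V E W 1 x e" and "e > 0"
    and budget: "real s + real L / e + (\<Sum>(u, z)\<in>W \<times> W. real (card (paths V E u z))) \<le> real t"
  shows "\<exists>\<pi> F. routing_system V E W L s t \<pi> F"
proof -
  obtain \<pi> where \<pi>: "\<forall>u\<in>W. \<forall>z\<in>W. \<forall>j<L. \<pi> (u, z, j) \<in> paths V E u z"
    and load: "\<forall>w\<in>V. real (card {\<sigma> \<in> W \<times> W \<times> {..<L}. w \<in> set (\<pi> \<sigma>)})
            \<le> real L / e + (\<Sum>(u, z)\<in>W \<times> W. real (card (paths V E u z)))"
    using path_selection_with_bounded_load[OF assms(1-4)] by blast
  have "card {\<sigma> \<in> W \<times> W \<times> {..<L}. w \<in> set (\<pi> \<sigma>)} \<le> t - s" if "w \<in> V" for w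
  proof -
    have "real (card {\<sigma> \<in> W \<times> W \<times> {..<L}. w \<in> set (\<pi> \<sigma>)} + s) \<le> real t"
      using load that budget by fastforce
    then show ?thesis by linarith
  qed
  moreover have "finite W" using assms(1,2) by (rule rev_finite_subset)
  ultimately show ?thesis using routing_system_if_load_bounded[OF _ \<pi>] by blast
qed

lemma layer_budget:
  fixes e N :: real and k s t L :: nat
  assumes "e > 0" and "k > 0" and "e * k \<le> 1" and "0 \<le> N"
    and large: "2 * (1 + 2 / (k * e) + 2 / e + N) \<le> t"
    and s_def: "s = nat \<lceil>e * k * t / 108\<rceil>" and L_def: "L = 2 * s div k + 2"
  shows "real s + real L / e + N \<le> real t"
proof -
  have s: "real s \<le> e * k * t / 108 + 1"
    unfolding s_def using assms(1) by (intro nat_ceiling_le_plus_one) simp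
  have "e * k * t \<le> t" using mult_right_mono[OF assms(3), of t] by simp
  then have s': "real s \<le> t / 108 + 1" using s by linarith
  have "real L \<le> 2 * real s / k + 2"
    unfolding L_def using of_nat_div_le_of_nat[of "2 * s" k] by simp
  then have "real L / e \<le> (2 * real s / k + 2) / e" using assms(1) by (simp add: divide_right_mono)
  also have "\<dots> = 2 * real s / (k * e) + 2 / e" using assms(1,2) by (simp add: field_simps)
  also have "\<dots> \<le> 2 * (e * k * t / 108 + 1) / (k * e) + 2 / e"
    using s assms(1,2) by (intro add_right_mono divide_right_mono) auto
  also have "\<dots> = 2 * real t / 108 + 2 / (k * e) + 2 / e"
    using assms(1,2) by (simp add: field_simps)
  finally have "real L / e \<le> 2 * real t / 108 + 2 / (k * e) + 2 / e" .
  then show ?thesis using s' large by simp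
qed

lemma eventually_large_matching_linked:
  assumes sg: "simple_graph V E" and "W \<subseteq> V" and "W \<noteq> {}"
    and feas: "cf_feasible V E W 1 x e" and "e > 0"
  shows "\<exists>T. \<forall>t\<ge>T. \<exists>X. matching_linked (blowup_V V t) (blowup_E E) X
            \<and> card X = nat \<lfloor>e * real (card W) ^ 2 / 108 * real t\<rfloor>"
proof -
  have fV: "finite V" using sg unfolding simple_graph_def by simp
  have fW: "finite W" using fV assms(2) finite_subset by blast
  define k where "k = card W"
  have "k > 0" unfolding k_def using fW assms(3) by (simp add: card_gt_0_iff)
  have ek: "e * k \<le> 1" unfolding k_def using cf_feasible_value_le[OF fW assms(2,3) feas] .
  define N where "N = (\<Sum>(u, z)\<in>W \<times> W. real (card (paths V E u z)))"
  have "0 \<le> N" unfolding N_def by (intro sum_nonneg) auto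
  show ?thesis
  proof (intro exI[of _ "nat \<lceil>2 * (1 + 2 / (k * e) + 2 / e + N)\<rceil>"] allI impI)
    fix t :: nat assume "nat \<lceil>2 * (1 + 2 / (k * e) + 2 / e + N)\<rceil> \<le> t"
    then have large: "2 * (1 + 2 / (k * e) + 2 / e + N) \<le> t" by linarith
    define s where "s = nat \<lceil>e * k * t / 108\<rceil>"
    define L where "L = 2 * s div k + 2"
    have budget: "real s + real L / e + N \<le> real t"
      using layer_budget[OF \<open>e > 0\<close> \<open>k > 0\<close> ek \<open>0 \<le> N\<close> large s_def L_def] .
    then obtain \<pi> F where rs: "routing_system V E W L s t \<pi> F"
      using routing_system_exists[OF fV assms(2) feas \<open>e > 0\<close>] unfolding N_def by blast
    have "0 \<le> real L / e" using \<open>e > 0\<close> by simp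
    then have "s \<le> t" using budget \<open>0 \<le> N\<close> by linarith
    have "2 * s + card W \<le> card W * L"
      unfolding L_def k_def using add_le_mul_div_add_two \<open>k > 0\<close> k_def by blast
    have "real (nat \<lfloor>e * real k ^ 2 / 108 * t\<rfloor>) \<le> e * real k ^ 2 / 108 * t"
      using \<open>e > 0\<close> by (intro of_nat_floor) simp
    also have "\<dots> = k * (e * k * t / 108)" by (simp add: power2_eq_square)
    also have "\<dots> \<le> k * real s" unfolding s_def by (intro mult_left_mono) linarith+
    finally have "nat \<lfloor>e * real k ^ 2 / 108 * t\<rfloor> \<le> k * s"
      by (simp only: of_nat_mult[symmetric] of_nat_le_iff)
    then have "nat \<lfloor>e * real k ^ 2 / 108 * t\<rfloor> \<le> card (W \<times> {..<s})"
      unfolding k_def by (simp add: card_cartesian_product)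
    then obtain X where X: "X \<subseteq> W \<times> {..<s}" "card X = nat \<lfloor>e * real k ^ 2 / 108 * t\<rfloor>"
      by (meson obtain_subset_with_card_n)
    have "matching_linked (blowup_V V t) (blowup_E E) X"
      using matching_linked_if_routing_system[OF sg assms(2) rs \<open>s \<le> t\<close> _ X(1)]
        \<open>2 * s + card W \<le> card W * L\<close> .
    then show "\<exists>X. matching_linked (blowup_V V t) (blowup_E E) X
        \<and> card X = nat \<lfloor>e * real (card W) ^ 2 / 108 * real t\<rfloor>"
      using X(2) unfolding k_def by blast
  qed
qed

lemma le_linkage_capacity:
  assumes "simple_graph V E" and "c > 0"
    and "\<exists>T. \<forall>t\<ge>T. \<exists>X. matching_linked (blowup_V V t) (blowup_E E) X \<and> card X = nat \<lfloor>c * real t\<rfloor>"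
  shows "c \<le> linkage_capacity V E"
proof -
  define S where "S = {c. c > 0 \<and> (\<exists>T. \<forall>t\<ge>T. \<exists>X.
       matching_linked (blowup_V V t) (blowup_E E) X \<and> card X = nat \<lfloor>c * real t\<rfloor>)}"
  have "c' \<le> real (card V) + 1" if c': "c' \<in> S" for c'
  proof -
    obtain T where "c' > 0" and T: "\<forall>t\<ge>T. \<exists>X. matching_linked (blowup_V V t) (blowup_E E) X
        \<and> card X = nat \<lfloor>c' * real t\<rfloor>" using c' unfolding S_def by blast
    define t where "t = max T 1"
    have "T \<le> t" "1 \<le> t" unfolding t_def by simp_all
    then obtain X where X: "matching_linked (blowup_V V t) (blowup_E E) X" "card X = nat \<lfloor>c' * real t\<rfloor>"
      using T by blast
    have "finite V" using assms(1) unfolding simple_graph_def by simp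
    moreover have "X \<subseteq> V \<times> {..<t}" using X(1) unfolding matching_linked_def blowup_V_def by simp
    ultimately have "card X \<le> card V * t" using card_mono[of "V \<times> {..<t}" X] by (simp add: card_cartesian_product)
    have "real (card X) = of_int \<lfloor>c' * t\<rfloor>" using X(2) \<open>c' > 0\<close> by simp
    then have "c' * t < real (card X) + 1" using floor_correct[of "c' * t"] by linarith
    moreover have "real (card X) \<le> real (card V) * t"
      using \<open>card X \<le> card V * t\<close> by (simp only: of_nat_mult[symmetric] of_nat_le_iff)
    ultimately have "c' * t < real (card V) * t + 1" by linarith
    also have "\<dots> \<le> (real (card V) + 1) * t" using \<open>1 \<le> t\<close> by (simp add: algebra_simps)
    finally show ?thesis by (simp add: mult_less_cancel_right)
  qed
  then have "bdd_above S" by (rule bdd_aboveI)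
  moreover have "c \<in> S" unfolding S_def using assms(2,3) by blast
  ultimately show ?thesis unfolding linkage_capacity_def S_def[symmetric] by (rule cSup_upper[rotated])
qed

lemma cf_value_le_linkage_capacity:
  assumes "simple_graph V E" and "W \<subseteq> V" and "W \<noteq> {}"
    and "cf_feasible V E W 1 x e" and "e > 0"
  shows "e * real (card W) ^ 2 / 108 \<le> linkage_capacity V E"
proof (rule le_linkage_capacity[OF assms(1) _ eventually_large_matching_linked[OF assms]])
  have "finite V" using assms(1) unfolding simple_graph_def by simp
  then have "finite W" using assms(2) by (rule rev_finite_subset)
  then show "e * real (card W) ^ 2 / 108 > 0" using assms(3,5) by (simp add: card_gt_0_iff)
qed

theorem mainTheorem17:
  fixes V W :: "'v set" and E :: "'v \<Rightarrow> 'v \<Rightarrow> bool"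
  assumes "simple_graph V E" and "W \<subseteq> V" and "W \<noteq> {}"
  shows "linkage_capacity V E \<ge> eps_cf V E W * real (card W) ^ 2 / 108"
proof -
  let ?k = "real (card W) ^ 2"
  have "finite V" using assms(1) unfolding simple_graph_def by simp
  then have "finite W" using assms(2) by (rule rev_finite_subset)
  then have "?k > 0" using assms(3) by (simp add: card_gt_0_iff)
  txt \<open>A single terminal already gives \<open>\<gamma>(H) > 0\<close>; this handles feasible values \<open>e \<le> 0\<close>.\<close>
  obtain w where "w \<in> W" using assms(3) by blast
  then have "1 / 108 \<le> linkage_capacity V E"
    using cf_value_le_linkage_capacity[OF assms(1) _ _ cf_feasible_singleton] assms(2) by fastforce
  have "e \<le> 108 * linkage_capacity V E / ?k" if "cf_feasible V E W 1 x e" for x e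
  proof (cases "e > 0")
    case True
    then show ?thesis using cf_value_le_linkage_capacity[OF assms that] \<open>?k > 0\<close> by (simp add: field_simps)
  next
    case False
    then have "e * ?k \<le> 0" using \<open>?k > 0\<close> by (simp add: mult_nonpos_nonneg)
    then show ?thesis using \<open>1 / 108 \<le> linkage_capacity V E\<close> \<open>?k > 0\<close> by (simp add: field_simps)
  qed
  moreover have "cf_feasible V E W 1 (\<lambda>_. 0) 0" unfolding cf_feasible_def by simp
  ultimately have "eps_cf V E W \<le> 108 * linkage_capacity V E / ?k"
    unfolding eps_cf_def by (intro cSup_least) auto
  then show ?thesis using \<open>?k > 0\<close> by (simp add: field_simps)
qed

end
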